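(* Let $\lambda=1$ and let $T_1,T_2,T_3$ be $0$-currents in $\mathbb{R}^d$, each consisting of a single point mass of multiplicity $+1$ (so each has mass $1$ and positive orientation), located at three points whose pairwise distances all exceed $4$. Then the unique minimizer over integral $0$-currents $T$ of $\sum_{i=1}^3\mathbb{F}_1(T-T_i)$ is the zero (empty) $0$-current.
   Context: Integral $0$-currents are finite integer combinations of signed point masses. For a $0$-current $H$, $\mathbb{F}_\lambda(H)=\inf_{S}\operatorname{M}(H-\partial S)+\lambda\operatorname{M}(S)$, the infimum over $1$-currents $S$ in $\mathbb{R}^d$, where $\operatorname{M}$ denotes mass. The minimizer of $T\mapsto\sum_i\mathbb{F}_\lambda(T-T_i)$ over integral currents is called the median of the $T_i$. *)

theory Defs
  imports "HOL-Analysis.Analysis"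
begin

text \<open>Currents in a Euclidean space 'a (= R^d) in the sense of de Rham:
 0-currents act on smooth compactly supported real functions (0-forms),
 1-currents act on smooth compactly supported vector fields (1-forms, identified
 with vector fields via the inner product).\<close>

fun Ck :: "nat \<Rightarrow> ('a::euclidean_space \<Rightarrow> real) set" where
  "Ck 0 = {f. continuous_on UNIV f}"
| "Ck (Suc k) = {f. (\<forall>x. f differentiable (at x)) \<and> continuous_on UNIV f \<and>
      (\<forall>i\<in>Basis. (\<lambda>x. frechet_derivative f (at x) i) \<in> Ck k)}"

definition smooth_fun :: "('a::euclidean_space \<Rightarrow> real) \<Rightarrow> bool" where
  "smooth_fun f \<longleftrightarrow> (\<forall>k. f \<in> Ck k)"

definition test0 :: "('a::euclidean_space \<Rightarrow> real) set" where
  "test0 = {f. smooth_fun f \<and> compact (closure {x. f x \<noteq> 0})}"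

definition test1 :: "('a::euclidean_space \<Rightarrow> 'a) set" where
  "test1 = {w. (\<forall>i\<in>Basis. smooth_fun (\<lambda>x. w x \<bullet> i)) \<and> compact (closure {x. w x \<noteq> 0})}"

definition current1 :: "(('a::euclidean_space \<Rightarrow> 'a) \<Rightarrow> real) \<Rightarrow> bool" where
  "current1 S \<longleftrightarrow> (\<forall>w\<in>test1. \<forall>v\<in>test1. \<forall>a b.
      S (\<lambda>x. a *\<^sub>R w x + b *\<^sub>R v x) = a * S w + b * S v)"

definition grad :: "('a::euclidean_space \<Rightarrow> real) \<Rightarrow> 'a \<Rightarrow> 'a" where
  "grad f = (\<lambda>x. \<Sum>i\<in>Basis. frechet_derivative f (at x) i *\<^sub>R i)"

definition bdry :: "(('a::euclidean_space \<Rightarrow> 'a) \<Rightarrow> real) \<Rightarrow> ('a \<Rightarrow> real) \<Rightarrow> real" where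
  "bdry S = (\<lambda>f. S (grad f))"

definition mass0 :: "(('a::euclidean_space \<Rightarrow> real) \<Rightarrow> real) \<Rightarrow> ereal" where
  "mass0 H = (SUP f\<in>{f\<in>test0. \<forall>x. \<bar>f x\<bar> \<le> 1}. ereal (H f))"

definition mass1 :: "(('a::euclidean_space \<Rightarrow> 'a) \<Rightarrow> real) \<Rightarrow> ereal" where
  "mass1 S = (SUP w\<in>{w\<in>test1. \<forall>x. norm (w x) \<le> 1}. ereal (S w))"

definition flat :: "real \<Rightarrow> (('a::euclidean_space \<Rightarrow> real) \<Rightarrow> real) \<Rightarrow> ereal" where
  "flat lam H = (INF S\<in>{S. current1 S}.
      mass0 (\<lambda>f. H f - bdry S f) + ereal lam * mass1 S)"

text \<open>Integral 0-currents: finitely supported integer multiplicities on points.\<close>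
definition integral0 :: "('a \<Rightarrow> int) \<Rightarrow> bool" where
  "integral0 T \<longleftrightarrow> finite {x. T x \<noteq> 0}"

definition cur0 :: "('a \<Rightarrow> int) \<Rightarrow> ('a \<Rightarrow> real) \<Rightarrow> real" where
  "cur0 T = (\<lambda>f. \<Sum>x\<in>{x. T x \<noteq> 0}. of_int (T x) * f x)"

definition pt :: "'a \<Rightarrow> 'a \<Rightarrow> int" where
  "pt p = (\<lambda>x. if x = p then 1 else 0)"

definition median_obj :: "real \<Rightarrow> ('a::euclidean_space \<Rightarrow> int) list \<Rightarrow> ('a \<Rightarrow> int) \<Rightarrow> ereal" where
  "median_obj lam Ts T = (\<Sum>Ti\<leftarrow>Ts. flat lam (cur0 (\<lambda>x. T x - Ti x)))"

end

theory Submission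
  imports Defs "HOL-Computational_Algebra.Polynomial"
begin

text \<open>Testing against a smooth compactly supported \<open>f\<close> with \<open>\<bar>f\<bar> \<le> 1\<close> and \<open>\<parallel>grad f\<parallel> \<le> 1\<close> gives
  \<open>\<FF>\<^sub>1(H) \<ge> H(f)\<close>, while \<open>S = 0\<close> gives \<open>\<FF>\<^sub>1(-\<delta>\<^sub>p) \<le> 1\<close>, so the objective at \<open>0\<close> is at most \<open>3\<close>.
  For an integral \<open>T\<close>, test \<open>T - \<delta>\<^sub>p\<^sub>i\<close> with
  \<open>f\<^sub>i = -\<beta>\<^sub>p\<^sub>i + \<beta>\<^sub>p\<^sub>j/2 + \<beta>\<^sub>p\<^sub>k/2 + u\<^sub>i \<gamma>\<close>, where the \<open>\<beta>\<^sub>p\<close> are radial cut-offs of radius \<open>b > 2\<close>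
  whose gradients have norm below \<open>1\<close> (their supports are disjoint because the points are
  more than \<open>4\<close> apart) and \<open>\<gamma>\<close> is a tiny bump at a point \<open>x0\<close> of the support of \<open>T\<close>.
  The cut-offs cancel in \<open>f\<^sub>1 + f\<^sub>2 + f\<^sub>3\<close> and \<open>f\<^sub>i(p\<^sub>i) = -1\<close>, so the objective at \<open>T\<close> is at least
  \<open>3 + (u\<^sub>1 + u\<^sub>2 + u\<^sub>3) T(x0) \<gamma>(x0)\<close>; giving the \<open>u\<^sub>i\<close> the sign of \<open>T(x0)\<close> makes this exceed \<open>3\<close>
  unless \<open>T = 0\<close>.\<close>

section \<open>Smooth functions\<close>

abbreviation partial_deriv :: "('a::euclidean_space \<Rightarrow> real) \<Rightarrow> 'a \<Rightarrow> 'a \<Rightarrow> real" where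
  "partial_deriv f i \<equiv> (\<lambda>x. frechet_derivative f (at x) i)"

lemma frechet_derivative_apply:
  "(f has_derivative f') (at x) \<Longrightarrow> frechet_derivative f (at x) i = f' i"
  by (metis frechet_derivative_at)

lemma continuous_on_UNIV_if_differentiable:
  "(\<forall>x. f differentiable (at x)) \<Longrightarrow> continuous_on UNIV f"
  by (simp add: differentiable_imp_continuous_within continuous_at_imp_continuous_on)

lemma Ck_SucI:
  assumes "\<And>x. (f has_derivative f' x) (at x)" and "\<And>i. i \<in> Basis \<Longrightarrow> (\<lambda>x. f' x i) \<in> Ck k"
  shows "f \<in> Ck (Suc k)"
proof -
  have diff: "\<forall>x. f differentiable (at x)"
    using assms(1) by (auto simp: differentiable_def)
  have "partial_deriv f i = (\<lambda>x. f' x i)" for i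
    by (rule ext, rule frechet_derivative_apply[OF assms(1)])
  then show ?thesis
    using assms(2) diff continuous_on_UNIV_if_differentiable[OF diff] by simp
qed

lemma Ck_Suc_imp_Ck: "f \<in> Ck (Suc k) \<Longrightarrow> f \<in> Ck k"
proof (induction k arbitrary: f)
  case 0
  then show ?case by simp
next
  case (Suc k)
  then show ?case by (simp del: Ck.simps(1))
qed

lemma Ck_const: "(\<lambda>x::'a::euclidean_space. c) \<in> Ck k"
  by (induction k arbitrary: c) (auto intro!: Ck_SucI)

lemma Ck_add: "f \<in> Ck k \<Longrightarrow> g \<in> Ck k \<Longrightarrow> (\<lambda>x. f x + g x) \<in> Ck k"
proof (induction k arbitrary: f g)
  case 0
  then show ?case by (auto intro: continuous_on_add)
next
  case (Suc k)
  then have "\<And>x. (f has_derivative frechet_derivative f (at x)) (at x)"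
    and "\<And>x. (g has_derivative frechet_derivative g (at x)) (at x)"
    by (auto simp: frechet_derivative_works)
  then show ?case
    using Suc by (intro Ck_SucI[where f'="\<lambda>x h. frechet_derivative f (at x) h + frechet_derivative g (at x) h"])
      (auto intro: has_derivative_add)
qed

lemma Ck_mult: "f \<in> Ck k \<Longrightarrow> g \<in> Ck k \<Longrightarrow> (\<lambda>x. f x * g x) \<in> Ck k"
proof (induction k arbitrary: f g)
  case 0
  then show ?case by (auto intro: continuous_on_mult)
next
  case (Suc k)
  then have "\<And>x. (f has_derivative frechet_derivative f (at x)) (at x)"
    and "\<And>x. (g has_derivative frechet_derivative g (at x)) (at x)"
    by (auto simp: frechet_derivative_works)
  then have "((\<lambda>x. f x * g x) has_derivative
      (\<lambda>h. f x * frechet_derivative g (at x) h + frechet_derivative f (at x) h * g x)) (at x)" for x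
    by (rule has_derivative_mult)
  moreover have "(\<lambda>x. f x * partial_deriv g i x + partial_deriv f i x * g x) \<in> Ck k" if "i \<in> Basis" for i
  proof -
    have "f \<in> Ck k" "g \<in> Ck k" "partial_deriv f i \<in> Ck k" "partial_deriv g i \<in> Ck k"
      using Suc.prems that by (auto intro: Ck_Suc_imp_Ck)
    then show ?thesis by (intro Ck_add Suc.IH)
  qed
  ultimately show ?case by (rule Ck_SucI)
qed

lemma Ck_inner_affine: "(\<lambda>x::'a::euclidean_space. x \<bullet> v + c) \<in> Ck k"
proof (induction k arbitrary: c)
  case 0
  then show ?case by (auto intro!: continuous_intros)
next
  case (Suc k)
  show ?case
    by (rule Ck_SucI[where f'="\<lambda>x h. h \<bullet> v"]) (auto intro!: derivative_eq_intros Ck_const)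
qed

lemma smooth_fun_partial_deriv:
  assumes "smooth_fun f" "i \<in> Basis"
  shows "smooth_fun (partial_deriv f i)"
  unfolding smooth_fun_def
proof
  fix k
  have "f \<in> Ck (Suc k)" using assms(1) unfolding smooth_fun_def by blast
  then show "partial_deriv f i \<in> Ck k" using assms(2) by simp
qed

lemma smooth_fun_has_derivative:
  assumes "smooth_fun f"
  shows "(f has_derivative frechet_derivative f (at x)) (at x)"
proof -
  have "f \<in> Ck (Suc 0)" using assms unfolding smooth_fun_def by blast
  then show ?thesis by (simp add: frechet_derivative_works)
qed

lemma smooth_funI_Ck_Suc: "(\<And>k. f \<in> Ck (Suc k)) \<Longrightarrow> smooth_fun f"
  unfolding smooth_fun_def using Ck_Suc_imp_Ck by blast

lemma smooth_fun_const: "smooth_fun (\<lambda>x::'a::euclidean_space. c)"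
  by (simp add: smooth_fun_def Ck_const)

lemma smooth_fun_add: "smooth_fun f \<Longrightarrow> smooth_fun g \<Longrightarrow> smooth_fun (\<lambda>x. f x + g x)"
  unfolding smooth_fun_def by (blast intro: Ck_add)

lemma smooth_fun_mult: "smooth_fun f \<Longrightarrow> smooth_fun g \<Longrightarrow> smooth_fun (\<lambda>x. f x * g x)"
  unfolding smooth_fun_def by (blast intro: Ck_mult)

lemma smooth_fun_cmult: "smooth_fun f \<Longrightarrow> smooth_fun (\<lambda>x. c * f x)"
  by (rule smooth_fun_mult[OF smooth_fun_const])

lemma smooth_fun_inner_affine: "smooth_fun (\<lambda>x::'a::euclidean_space. x \<bullet> v + c)"
  by (simp add: smooth_fun_def Ck_inner_affine)

lemma smooth_fun_sqdist: "smooth_fun (\<lambda>x::'a::euclidean_space. (x - p) \<bullet> (x - p))"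
proof (rule smooth_funI_Ck_Suc)
  fix k
  have "(\<lambda>x. x \<bullet> (2 *\<^sub>R i) - 2 * (p \<bullet> i)) \<in> Ck k" for i :: 'a
    using Ck_inner_affine[of "2 *\<^sub>R i" "- 2 * (p \<bullet> i)" k] by simp
  then show "(\<lambda>x::'a. (x - p) \<bullet> (x - p)) \<in> Ck (Suc k)"
    by (intro Ck_SucI[where f'="\<lambda>x h. 2 * ((x - p) \<bullet> h)"])
      (auto intro!: derivative_eq_intros simp: inner_commute inner_diff_left inner_diff_right)
qed

lemma linear_real_apply: "linear (L::real \<Rightarrow> real) \<Longrightarrow> L h = h * L 1"
  by (metis linear_scale mult.commute mult.right_neutral real_scaleR_def)

lemma smooth_fun_compose:
  fixes q :: "'a::euclidean_space \<Rightarrow> real"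
  assumes q: "smooth_fun q" and G: "smooth_fun (G::real \<Rightarrow> real)"
  shows "smooth_fun (\<lambda>x. G (q x))"
proof -
  have "(\<lambda>x. G (q x)) \<in> Ck k" if "smooth_fun G" for k and G :: "real \<Rightarrow> real"
    using that
  proof (induction k arbitrary: G)
    case 0
    have "G \<in> Ck 0" "q \<in> Ck 0"
      using 0 q unfolding smooth_fun_def by blast+
    then have "continuous_on UNIV G" "continuous_on UNIV q" by simp_all
    then show ?case using continuous_on_compose2[of UNIV G UNIV q] by simp
  next
    case (Suc k)
    have chain: "((\<lambda>x. G (q x)) has_derivative
        (\<lambda>h. frechet_derivative q (at x) h * partial_deriv G 1 (q x))) (at x)" for x
    proof -
      have "linear (frechet_derivative G (at (q x)))"
        using smooth_fun_has_derivative[OF Suc.prems] by (rule has_derivative_linear)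
      then have eq: "frechet_derivative G (at (q x)) \<circ> frechet_derivative q (at x) =
          (\<lambda>h. frechet_derivative q (at x) h * partial_deriv G 1 (q x))"
        by (intro ext) (simp add: linear_real_apply[of _ "frechet_derivative q (at x) _"])
      have "((G \<circ> q) has_derivative frechet_derivative G (at (q x)) \<circ> frechet_derivative q (at x)) (at x)"
        by (rule diff_chain_at[OF smooth_fun_has_derivative[OF q] smooth_fun_has_derivative[OF Suc.prems]])
      then show ?thesis by (simp only: eq comp_def[of G q])
    qed
    have "(\<lambda>x. partial_deriv q i x * partial_deriv G 1 (q x)) \<in> Ck k" if "i \<in> Basis" for i
    proof (rule Ck_mult)
      show "partial_deriv q i \<in> Ck k"
        using smooth_fun_partial_deriv[OF q that] unfolding smooth_fun_def by blast
      show "(\<lambda>x. partial_deriv G 1 (q x)) \<in> Ck k"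
        using smooth_fun_partial_deriv[OF Suc.prems, of 1] by (intro Suc.IH) simp
    qed
    then show ?case by (intro Ck_SucI[OF chain])
  qed
  then show ?thesis using G by (simp add: smooth_fun_def)
qed

lemma smooth_fun_compose_affine: "smooth_fun G \<Longrightarrow> smooth_fun (\<lambda>s::real. G (k * s + c))"
  using smooth_fun_compose[OF smooth_fun_inner_affine[of k c]] by (simp add: mult.commute)

lemma smooth_fun_from_deriv:
  fixes G g :: "real \<Rightarrow> real"
  assumes "\<And>s. (G has_real_derivative g s) (at s)" and "smooth_fun g"
  shows "smooth_fun G"
proof (rule smooth_funI_Ck_Suc)
  fix k
  have "(G has_derivative (\<lambda>h. g s * h)) (at s)" for s
    using assms(1) by (simp add: has_field_derivative_def)
  moreover have "g \<in> Ck k" using assms(2) unfolding smooth_fun_def by blast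
  ultimately show "G \<in> Ck (Suc k)"
    by (intro Ck_SucI[where f'="\<lambda>s h. g s * h"]) simp_all
qed

section \<open>The function \<open>exp (-1/t)\<close>\<close>

definition expinv_poly :: "real poly \<Rightarrow> real \<Rightarrow> real" where
  "expinv_poly Q t = (if t > 0 then poly Q (1/t) * exp (-1/t) else 0)"

text \<open>With \<open>u = 1/t\<close>, the derivative of \<open>Q u * exp (-u)\<close> in \<open>t\<close> is \<open>u\<^sup>2 * (Q u - Q' u) * exp (-u)\<close>.\<close>
definition expinv_dpoly :: "real poly \<Rightarrow> real poly" where
  "expinv_dpoly Q = [:0, 0, 1:] * (Q - pderiv Q)"

lemma tendsto_poly_times_exp_neg_at_top: "((\<lambda>u. poly Q u * exp (-u)) \<longlongrightarrow> (0::real)) at_top"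
proof -
  have "((\<lambda>u. \<Sum>i\<le>degree Q. coeff Q i * (u ^ i / exp u)) \<longlongrightarrow> (\<Sum>i\<le>degree Q. coeff Q i * 0)) at_top"
    by (intro tendsto_sum tendsto_mult tendsto_const tendsto_power_div_exp_0)
  moreover have "poly Q u * exp (-u) = (\<Sum>i\<le>degree Q. coeff Q i * (u ^ i / exp u))" for u
    by (simp add: poly_altdef sum_distrib_right sum_divide_distrib[symmetric] exp_minus field_simps)
  ultimately show ?thesis by simp
qed

lemma has_real_derivative_expinv_poly_at_0:
  "(expinv_poly Q has_real_derivative 0) (at 0)"
proof -
  have right: "((\<lambda>y. (expinv_poly Q y - expinv_poly Q 0) / (y - 0)) \<longlongrightarrow> 0) (at_right 0)"
  proof -
    have "((\<lambda>y. poly (pCons 0 Q) (inverse y) * exp (- inverse y)) \<longlongrightarrow> (0::real)) (at_right 0)"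
      by (rule filterlim_compose[OF tendsto_poly_times_exp_neg_at_top filterlim_inverse_at_top_right])
    then show ?thesis
      by (rule Lim_transform_eventually)
        (auto simp: expinv_poly_def field_simps intro!: eventually_mono[OF eventually_at_right_less])
  qed
  have left: "((\<lambda>y. (expinv_poly Q y - expinv_poly Q 0) / (y - 0)) \<longlongrightarrow> 0) (at_left 0)"
    by (rule Lim_transform_eventually[OF tendsto_const])
      (auto simp: expinv_poly_def intro!: eventually_mono[OF eventually_at_left_real[of "-1"]])
  show ?thesis
    unfolding has_field_derivative_iff using left right filterlim_at_split by blast
qed

lemma has_real_derivative_expinv_poly:
  "(expinv_poly Q has_real_derivative expinv_poly (expinv_dpoly Q) t) (at t)"
proof -
  consider "t > 0" | "t < 0" | "t = 0" by linarith
  then show ?thesis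
  proof cases
    case 1
    have "((\<lambda>t. poly Q (1/t) * exp (-1/t)) has_real_derivative
        poly (pderiv Q) (1/t) * (- 1 / t^2) * exp (-1/t) + poly Q (1/t) * (exp (-1/t) * (1/t^2))) (at t)"
      using 1 by (auto intro!: derivative_eq_intros DERIV_chain2[where f="poly Q"] poly_DERIV
          simp: power2_eq_square field_simps)
    then have "((\<lambda>t. poly Q (1/t) * exp (-1/t)) has_real_derivative expinv_poly (expinv_dpoly Q) t) (at t)"
      using 1 by (simp add: expinv_poly_def expinv_dpoly_def algebra_simps power2_eq_square)
    then show ?thesis
      by (rule has_field_derivative_transform_within_open[where S="{0<..}"])
        (use 1 in \<open>auto simp: expinv_poly_def\<close>)
  next
    case 2
    have "((\<lambda>t. 0) has_real_derivative 0) (at t)" by simp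
    then have "(expinv_poly Q has_real_derivative 0) (at t)"
      by (rule has_field_derivative_transform_within_open[where S="{..<0}"])
        (use 2 in \<open>auto simp: expinv_poly_def\<close>)
    then show ?thesis using 2 by (simp add: expinv_poly_def)
  next
    case 3
    then show ?thesis using has_real_derivative_expinv_poly_at_0 by (simp add: expinv_poly_def)
  qed
qed

lemma smooth_fun_expinv_poly: "smooth_fun (expinv_poly Q)"
proof -
  have "expinv_poly Q \<in> Ck k" for k
  proof (induction k arbitrary: Q)
    case 0
    have "\<forall>x. expinv_poly Q differentiable (at x)"
      using has_real_derivative_expinv_poly real_differentiable_def by blast
    then show ?case by (simp add: continuous_on_UNIV_if_differentiable)
  next
    case (Suc k)
    show ?case
      using has_real_derivative_expinv_poly[of Q] Suc.IH
      by (intro Ck_SucI[where f'="\<lambda>s h. expinv_poly (expinv_dpoly Q) s * h"])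
        (simp_all add: has_field_derivative_def)
  qed
  then show ?thesis by (simp add: smooth_fun_def)
qed

definition psi :: "real \<Rightarrow> real" where
  "psi = expinv_poly 1"

definition psi' :: "real \<Rightarrow> real" where
  "psi' = expinv_poly (expinv_dpoly 1)"

lemma psi_eq: "psi t = (if t > 0 then exp (-1/t) else 0)"
  by (simp add: psi_def expinv_poly_def)

lemma psi'_eq: "psi' t = (if t > 0 then (1/t)\<^sup>2 * exp (-1/t) else 0)"
  by (simp add: psi'_def expinv_poly_def expinv_dpoly_def power2_eq_square)

lemma has_real_derivative_psi: "(psi has_real_derivative psi' t) (at t)"
  unfolding psi_def psi'_def by (rule has_real_derivative_expinv_poly)

lemma smooth_fun_psi: "smooth_fun psi"
  unfolding psi_def by (rule smooth_fun_expinv_poly)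

lemma psi_nonneg: "psi t \<ge> 0"
  by (simp add: psi_eq)

lemma psi_le_1: "psi t \<le> 1"
  by (simp add: psi_eq)

lemma exp_neg_inverse_le_psi: "u > 0 \<Longrightarrow> u \<le> t \<Longrightarrow> exp (-1/u) \<le> psi t"
  by (simp add: psi_eq frac_le)

lemma psi'_bounds: "0 \<le> psi' t \<and> psi' t \<le> 4"
proof (cases "t > 0")
  case False
  then show ?thesis by (simp add: psi'_eq)
next
  case True
  define u where "u = 1/t"
  have u: "u > 0" using True by (simp add: u_def)
  have "u \<le> 2 * exp (u/2)"
    using exp_ge_add_one_self[of "u/2"] by linarith
  then have "u\<^sup>2 \<le> (2 * exp (u/2))\<^sup>2" using u by (intro power_mono) auto
  also have "\<dots> = 4 * exp u" by (simp add: power2_eq_square mult_exp_exp)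
  finally have "u\<^sup>2 * exp (-u) \<le> 4 * exp u * exp (-u)" by (intro mult_right_mono) auto
  also have "\<dots> = 4" by (simp add: mult_exp_exp)
  finally show ?thesis using True by (simp add: psi'_eq u_def[symmetric] divide_inverse[symmetric])
qed

section \<open>A smooth radial profile with slope below one\<close>

definition interval_bump :: "real \<Rightarrow> real \<Rightarrow> real \<Rightarrow> real \<Rightarrow> real" where
  "interval_bump A B K s = psi (K * (s - A)) * psi (K * (B - s))"

definition interval_bump_integral :: "real \<Rightarrow> real \<Rightarrow> real \<Rightarrow> real \<Rightarrow> real" where
  "interval_bump_integral A B K s = integral {0..s} (interval_bump A B K)"

lemma smooth_fun_interval_bump: "smooth_fun (interval_bump A B K)"
proof -
  have "interval_bump A B K = (\<lambda>s. psi (K * s + - K * A) * psi (- K * s + K * B))"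
    by (rule ext) (simp add: interval_bump_def algebra_simps)
  then show ?thesis
    by (simp only:) (intro smooth_fun_mult smooth_fun_compose_affine smooth_fun_psi)
qed

lemma continuous_on_interval_bump: "continuous_on S (interval_bump A B K)"
proof -
  have "interval_bump A B K \<in> Ck 0"
    using smooth_fun_interval_bump unfolding smooth_fun_def by blast
  then show ?thesis using continuous_on_subset by fastforce
qed

lemma integrable_interval_bump: "interval_bump A B K integrable_on {u..v}"
  by (rule integrable_continuous_real[OF continuous_on_interval_bump])

lemma interval_bump_bounds: "0 \<le> interval_bump A B K s \<and> interval_bump A B K s \<le> 1"
  by (simp add: interval_bump_def psi_nonneg psi_le_1 mult_le_one)

context
  fixes A B K \<eta> :: real
  assumes A: "A > 0" and \<eta>: "\<eta> > 0" and K: "K > 0" and AB: "A + 2 * \<eta> \<le> B - \<eta>"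
begin

lemma interval_bump_eq_0: "s \<le> A \<or> s \<ge> B \<Longrightarrow> interval_bump A B K s = 0"
  using K by (auto simp: interval_bump_def psi_eq zero_less_mult_iff)

lemma interval_bump_lower:
  assumes "A + \<eta> \<le> s" "s \<le> B - \<eta>"
  shows "exp (-2 / (K * \<eta>)) \<le> interval_bump A B K s"
proof -
  have "exp (-1 / (K * \<eta>)) \<le> psi (K * (s - A))" "exp (-1 / (K * \<eta>)) \<le> psi (K * (B - s))"
    using assms K \<eta> by (intro exp_neg_inverse_le_psi; simp)+
  then have "exp (-1 / (K * \<eta>)) * exp (-1 / (K * \<eta>)) \<le> interval_bump A B K s"
    unfolding interval_bump_def by (intro mult_mono) (auto simp: psi_nonneg)
  then show ?thesis by (simp add: mult_exp_exp)
qed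

lemma interval_bump_integral_eq_0: "s \<le> A \<Longrightarrow> interval_bump_integral A B K s = 0"
  unfolding interval_bump_integral_def
  by (subst integral_cong[where g="\<lambda>x. 0"]) (auto simp: interval_bump_eq_0)

lemma has_real_derivative_interval_bump_integral:
  "(interval_bump_integral A B K has_real_derivative interval_bump A B K s) (at s)"
proof (cases "s < A")
  case True
  have "((\<lambda>x. 0) has_real_derivative 0) (at s)" by simp
  then have "(interval_bump_integral A B K has_real_derivative 0) (at s)"
    by (rule has_field_derivative_transform_within_open[where S="{..<A}"])
      (use True interval_bump_integral_eq_0 in simp_all)
  then show ?thesis using True interval_bump_eq_0 by simp
next
  case False
  then have s: "0 < s" using A by simp
  have "((\<lambda>x. integral {0..x} (interval_bump A B K)) has_real_derivative interval_bump A B K s)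
      (at s within {0..s+1})"
    by (rule integral_has_real_derivative[OF continuous_on_interval_bump]) (use s in simp)
  moreover have "at s within {0..s+1} = at s"
    by (rule at_within_interior) (use s in simp)
  ultimately show ?thesis by (simp add: interval_bump_integral_def[abs_def])
qed

lemma interval_bump_integral_nonneg: "0 \<le> interval_bump_integral A B K s"
  unfolding interval_bump_integral_def
  by (rule integral_nonneg) (auto intro: integrable_interval_bump simp: interval_bump_bounds)

lemma interval_bump_integral_mono:
  assumes "s \<le> t"
  shows "interval_bump_integral A B K s \<le> interval_bump_integral A B K t"
proof (cases "s < 0")
  case True
  then show ?thesis using A interval_bump_integral_eq_0 interval_bump_integral_nonneg by simp
next
  case False
  then show ?thesis unfolding interval_bump_integral_def
    by (intro integral_subset_le) (use assms in \<open>auto intro: integrable_interval_bump simp: interval_bump_bounds\<close>)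
qed

lemma interval_bump_integral_eq_total: "s \<ge> B \<Longrightarrow> interval_bump_integral A B K s = interval_bump_integral A B K B"
proof -
  assume s: "s \<ge> B"
  have "B \<ge> 0" using A \<eta> AB by simp
  then have "integral {0..s} (interval_bump A B K) =
      integral {0..B} (interval_bump A B K) + integral {B..s} (interval_bump A B K)"
    using Henstock_Kurzweil_Integration.integral_combine[OF _ s integrable_interval_bump] by simp
  moreover have "integral {B..s} (interval_bump A B K) = 0"
    by (subst integral_cong[where g="\<lambda>x. 0"]) (auto simp: interval_bump_eq_0)
  ultimately show ?thesis by (simp add: interval_bump_integral_def)
qed

lemma sqrt_mult_interval_bump_le: "sqrt s * interval_bump A B K s \<le> sqrt B"
proof (cases "s \<ge> B")
  case True
  then show ?thesis using A \<eta> AB by (simp add: interval_bump_eq_0)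
next
  case False
  then have "sqrt s * interval_bump A B K s \<le> sqrt B * interval_bump A B K s"
    using interval_bump_bounds[of A B K s] by (intro mult_right_mono) auto
  also have "\<dots> \<le> sqrt B"
    using interval_bump_bounds[of A B K s] A \<eta> AB by (intro mult_left_le) auto
  finally show ?thesis .
qed

lemma interval_bump_integral_lower:
  assumes "A + \<eta> \<le> u" "u \<le> v" "v \<le> B - \<eta>" "v \<le> s"
  shows "(v - u) * exp (-2 / (K * \<eta>)) \<le> interval_bump_integral A B K s"
proof -
  have "integral {u..v} (\<lambda>x. exp (-2 / (K * \<eta>))) \<le> integral {u..v} (interval_bump A B K)"
    using assms by (intro integral_le integrable_interval_bump interval_bump_lower) auto
  also have "\<dots> \<le> integral {0..s} (interval_bump A B K)"
    using assms A \<eta> by (intro integral_subset_le integrable_interval_bump)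
      (auto simp: interval_bump_bounds)
  finally show ?thesis using assms by (simp add: interval_bump_integral_def)
qed

end

text \<open>\<open>G\<close> is the profile of the radial cut-off \<open>x \<mapsto> G (\<parallel>x - p\<parallel>\<^sup>2)\<close>, whose gradient is
  \<open>2 g (\<parallel>x - p\<parallel>\<^sup>2) (x - p)\<close>; so \<open>slope_le\<close> bounds the norm of that gradient by \<open>\<theta> < 1\<close>.\<close>
locale radial_profile =
  fixes G g :: "real \<Rightarrow> real" and \<theta> \<kappa> b :: real
  assumes has_real_derivative_G: "\<And>s. (G has_real_derivative g s) (at s)"
    and smooth_fun_G: "smooth_fun G"
    and \<theta>_less_1: "\<theta> < 1"
    and \<kappa>_pos: "\<kappa> > 0"
    and b_pos: "b > 0"
    and G_0: "G 0 = 1"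
    and G_bounds: "\<And>s. 0 \<le> G s \<and> G s \<le> 1"
    and G_vanishes: "\<And>s. s \<ge> b\<^sup>2 \<Longrightarrow> G s = 0 \<and> g s = 0"
    and G_le: "\<And>s. s \<ge> b\<^sup>2 / 4 \<Longrightarrow> G s \<le> 1 - \<kappa>"
    and slope_le: "\<And>s. s \<ge> 0 \<Longrightarrow> 2 * sqrt s * \<bar>g s\<bar> \<le> \<theta>"

lemma radial_profile_interval_bump_integral:
  fixes A \<eta> K b :: real
  defines "Z \<equiv> interval_bump_integral A (b\<^sup>2) K (b\<^sup>2)"
  assumes A: "A > 0" and \<eta>: "\<eta> > 0" and K: "K > 0" and b: "b > 0"
    and AB: "A + 2 * \<eta> \<le> b\<^sup>2 - \<eta>" and A_quarter: "A + 2 * \<eta> \<le> b\<^sup>2 / 4" and Z: "Z > 2 * b"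
  shows "radial_profile (\<lambda>s. 1 - interval_bump_integral A (b\<^sup>2) K s / Z)
    (\<lambda>s. - interval_bump A (b\<^sup>2) K s / Z) (2 * b / Z) (\<eta> * exp (-2 / (K * \<eta>)) / Z) b"
proof unfold_locales
  note bump_facts = interval_bump_integral_eq_0[OF A \<eta> K AB] interval_bump_eq_0[OF A \<eta> K AB]
    interval_bump_integral_nonneg[OF A \<eta> K AB]
  note total = interval_bump_integral_eq_total[OF A \<eta> K AB, folded Z_def]
  have Z_pos: "Z > 0" using Z b by simp
  show "((\<lambda>s. 1 - interval_bump_integral A (b\<^sup>2) K s / Z) has_real_derivative
      - interval_bump A (b\<^sup>2) K s / Z) (at s)" for s
    using has_real_derivative_interval_bump_integral[OF A \<eta> K AB, of s] Z_pos
    by (auto intro!: derivative_eq_intros)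
  then show "smooth_fun (\<lambda>s. 1 - interval_bump_integral A (b\<^sup>2) K s / Z)"
    by (rule smooth_fun_from_deriv)
      (use smooth_fun_cmult[OF smooth_fun_interval_bump, of "- 1 / Z"] in simp)
  show "2 * b / Z < 1" "0 < \<eta> * exp (-2 / (K * \<eta>)) / Z" "b > 0"
    using Z Z_pos \<eta> b by simp_all
  show "1 - interval_bump_integral A (b\<^sup>2) K 0 / Z = 1"
    using A by (simp add: bump_facts)
  show "0 \<le> 1 - interval_bump_integral A (b\<^sup>2) K s / Z \<and> 1 - interval_bump_integral A (b\<^sup>2) K s / Z \<le> 1" for s
  proof -
    have "interval_bump_integral A (b\<^sup>2) K s \<le> interval_bump_integral A (b\<^sup>2) K (max s (b\<^sup>2))"
      by (rule interval_bump_integral_mono[OF A \<eta> K AB]) simp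
    then show ?thesis using Z_pos total[of "max s (b\<^sup>2)"] by (simp add: bump_facts)
  qed
  show "1 - interval_bump_integral A (b\<^sup>2) K s / Z = 0 \<and> - interval_bump A (b\<^sup>2) K s / Z = 0"
    if "b\<^sup>2 \<le> s" for s
    using that Z_pos total[OF that] by (simp add: bump_facts)
  show "1 - interval_bump_integral A (b\<^sup>2) K s / Z \<le> 1 - \<eta> * exp (-2 / (K * \<eta>)) / Z"
    if "b\<^sup>2 / 4 \<le> s" for s
  proof -
    have "\<eta> * exp (-2 / (K * \<eta>)) \<le> interval_bump_integral A (b\<^sup>2) K s"
      using interval_bump_integral_lower[OF A \<eta> K AB, of "A + \<eta>" "A + 2 * \<eta>" s] that A_quarter AB \<eta>
      by simp
    then show ?thesis using Z_pos by (simp add: divide_right_mono)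
  qed
  show "2 * sqrt s * \<bar>- interval_bump A (b\<^sup>2) K s / Z\<bar> \<le> 2 * b / Z" for s
    using sqrt_mult_interval_bump_le[OF A \<eta> K AB, of s] interval_bump_bounds[of A "b\<^sup>2" K s] Z_pos b
    by (simp add: divide_right_mono)
qed

lemma exists_exp_neg_inverse_gt:
  fixes c d :: real
  assumes "0 < d" "d < c"
  shows "\<exists>L>0. d < c * exp (-2 / L)"
proof -
  define L where "L = 4 * c / (c - d)"
  have L: "L > 0" using assms by (simp add: L_def)
  have "c * (1 - 2 / L) \<le> c * exp (-2 / L)"
    using exp_ge_add_one_self[of "-2 / L"] assms by (intro mult_left_mono) auto
  moreover have "c * (1 - 2 / L) = (c + d) / 2"
    using assms by (simp add: L_def field_simps)
  ultimately have "(c + d) / 2 \<le> c * exp (-2 / L)" by simp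
  moreover have "d < (c + d) / 2" using assms by simp
  ultimately have "d < c * exp (-2 / L)" by (rule order_less_le_trans[rotated])
  with L show ?thesis by blast
qed

lemma radial_profile_exists:
  assumes b: "b > 2"
  shows "\<exists>G g \<theta> \<kappa>. radial_profile G g \<theta> \<kappa> b"
proof -
  text \<open>The slope bound \<open>2 b / Z\<close> needs the total mass \<open>Z\<close> of the bump to exceed \<open>2 b\<close>; as the bump
    can be made close to \<open>1\<close> on most of \<open>[0, b\<^sup>2]\<close>, this is possible exactly because \<open>b\<^sup>2 > 2 b\<close>.\<close>
  define a where "a = (b\<^sup>2 - 2 * b) / 16"
  have a: "a > 0" using b by (simp add: a_def power2_eq_square)
  have "2 * b < b\<^sup>2 - 3 * a" using b by (simp add: a_def power2_eq_square field_simps)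
  then obtain L where L: "L > 0" "2 * b < (b\<^sup>2 - 3 * a) * exp (-2 / L)"
    using exists_exp_neg_inverse_gt[of "2 * b"] b by auto
  define K where "K = L / a"
  have K: "K > 0" and KL: "K * a = L" using L a by (simp_all add: K_def)
  have AB: "a + 2 * a \<le> b\<^sup>2 - a" and quarter: "a + 2 * a \<le> b\<^sup>2 / 4"
    using b by (simp_all add: a_def power2_eq_square field_simps)
  have "(b\<^sup>2 - 3 * a) * exp (-2 / (K * a)) \<le> interval_bump_integral a (b\<^sup>2) K (b\<^sup>2)"
    using interval_bump_integral_lower[OF a a K AB, of "2 * a" "b\<^sup>2 - a" "b\<^sup>2"] AB a by simp
  then have "interval_bump_integral a (b\<^sup>2) K (b\<^sup>2) > 2 * b" using L KL by simp
  then have "radial_profile (\<lambda>s. 1 - interval_bump_integral a (b\<^sup>2) K s / interval_bump_integral a (b\<^sup>2) K (b\<^sup>2))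
    (\<lambda>s. - interval_bump a (b\<^sup>2) K s / interval_bump_integral a (b\<^sup>2) K (b\<^sup>2))
    (2 * b / interval_bump_integral a (b\<^sup>2) K (b\<^sup>2))
    (a * exp (-2 / (K * a)) / interval_bump_integral a (b\<^sup>2) K (b\<^sup>2)) b"
    using b by (intro radial_profile_interval_bump_integral[OF a a K _ AB quarter]) simp_all
  then show ?thesis by blast
qed

section \<open>Lower and upper bounds for the flat norm\<close>

definition has_gradient :: "('a::euclidean_space \<Rightarrow> real) \<Rightarrow> ('a \<Rightarrow> 'a) \<Rightarrow> bool" where
  "has_gradient f g \<longleftrightarrow> (\<forall>x. (f has_derivative (\<lambda>h. g x \<bullet> h)) (at x))"

lemma grad_eq_if_has_gradient: "has_gradient f g \<Longrightarrow> grad f = g"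
proof (rule ext)
  fix x
  assume "has_gradient f g"
  then have "(f has_derivative (\<lambda>h. g x \<bullet> h)) (at x)" by (simp add: has_gradient_def)
  then have "grad f x = (\<Sum>i\<in>Basis. (g x \<bullet> i) *\<^sub>R i)"
    unfolding grad_def by (simp add: frechet_derivative_apply)
  then show "grad f x = g x" by (simp add: euclidean_representation)
qed

lemma grad_inner_Basis: "i \<in> Basis \<Longrightarrow> grad f x \<bullet> i = partial_deriv f i x"
  unfolding grad_def by (simp add: inner_sum_left inner_Basis if_distrib cong: if_cong)

lemma has_gradient_add:
  "has_gradient f g \<Longrightarrow> has_gradient f' g' \<Longrightarrow> has_gradient (\<lambda>x. f x + f' x) (\<lambda>x. g x + g' x)"
  unfolding has_gradient_def by (auto intro!: derivative_eq_intros simp: inner_add_left)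

lemma has_gradient_cmult: "has_gradient f g \<Longrightarrow> has_gradient (\<lambda>x. c * f x) (\<lambda>x. c *\<^sub>R g x)"
  unfolding has_gradient_def by (auto intro!: derivative_eq_intros)

lemma has_gradient_compose:
  assumes G: "\<And>s. (G has_real_derivative g s) (at s)" and q: "has_gradient q gq"
  shows "has_gradient (\<lambda>x. G (q x)) (\<lambda>x. g (q x) *\<^sub>R gq x)"
  unfolding has_gradient_def
proof
  fix x
  have "(q has_derivative (\<lambda>h. gq x \<bullet> h)) (at x)"
    using q by (simp add: has_gradient_def)
  moreover have "(G has_derivative (\<lambda>h. g (q x) * h)) (at (q x))"
    using G[of "q x"] by (simp add: has_field_derivative_def)
  ultimately show "((\<lambda>x. G (q x)) has_derivative (\<lambda>h. (g (q x) *\<^sub>R gq x) \<bullet> h)) (at x)"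
    using diff_chain_at by (fastforce simp: o_def)
qed

lemma has_gradient_compose_sqdist:
  assumes "\<And>s. (G has_real_derivative g s) (at s)"
  shows "has_gradient (\<lambda>x. G ((x - p) \<bullet> (x - p))) (\<lambda>x. (2 * g ((x - p) \<bullet> (x - p))) *\<^sub>R (x - p))"
proof -
  have "has_gradient (\<lambda>x. (x - p) \<bullet> (x - p)) (\<lambda>x. 2 *\<^sub>R (x - p))"
    unfolding has_gradient_def by (auto intro!: derivative_eq_intros simp: inner_commute)
  from has_gradient_compose[OF assms this] show ?thesis by (simp add: ac_simps)
qed

lemma grad_in_test1:
  assumes "smooth_fun f" "bounded {x. grad f x \<noteq> 0}"
  shows "grad f \<in> test1"
  unfolding test1_def using assms smooth_fun_partial_deriv[OF assms(1)] by (simp add: grad_inner_Basis)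

text \<open>The easy half of the duality for the flat norm: for every 1-current \<open>S\<close>,
  \<open>H f = (H - \<partial>S) f + S (grad f)\<close> is bounded by \<open>M (H - \<partial>S) + M S\<close>.\<close>
lemma pairing_le_flat:
  assumes f: "smooth_fun f" "bounded {x. f x \<noteq> 0}" "\<forall>x. \<bar>f x\<bar> \<le> 1"
    and g: "has_gradient f g" "bounded {x. g x \<noteq> 0}" "\<forall>x. norm (g x) \<le> 1"
  shows "ereal (H f) \<le> flat 1 H"
  unfolding flat_def
proof (rule INF_greatest)
  fix S :: "('a \<Rightarrow> 'a) \<Rightarrow> real"
  have f_test: "f \<in> {f \<in> test0. \<forall>x. \<bar>f x\<bar> \<le> 1}"
    using f by (simp add: test0_def)
  have g_test: "grad f \<in> {w \<in> test1. \<forall>x. norm (w x) \<le> 1}"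
    using grad_in_test1[OF f(1)] g grad_eq_if_has_gradient[OF g(1)] by simp
  have "ereal (H f) = ereal (H f - bdry S f) + ereal (S (grad f))"
    by (simp add: bdry_def)
  also have "\<dots> \<le> mass0 (\<lambda>f. H f - bdry S f) + mass1 S"
    unfolding mass0_def mass1_def
    by (intro add_mono SUP_upper[OF f_test, of "\<lambda>f. ereal (H f - bdry S f)"] SUP_upper[OF g_test])
  finally show "ereal (H f) \<le> mass0 (\<lambda>f. H f - bdry S f) + ereal 1 * mass1 S" by simp
qed

lemma cur0_add: "cur0 T (\<lambda>x. f x + g x) = cur0 T f + cur0 T g"
  by (simp add: cur0_def distrib_left sum.distrib)

lemma cur0_cmult: "cur0 T (\<lambda>x. c * f x) = c * cur0 T f"
  by (simp add: cur0_def sum_distrib_left algebra_simps)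

lemma cur0_eq_sum:
  assumes "finite W" "{x. T x \<noteq> 0} \<subseteq> W"
  shows "cur0 T f = (\<Sum>x\<in>W. of_int (T x) * f x)"
  unfolding cur0_def by (rule sum.mono_neutral_left) (use assms in auto)

lemma cur0_diff_pt:
  assumes "integral0 T"
  shows "cur0 (\<lambda>x. T x - pt p x) f = cur0 T f - f p"
proof -
  define W where "W = insert p {x. T x \<noteq> 0}"
  have W: "finite W" "p \<in> W" using assms by (simp_all add: W_def integral0_def)
  have "cur0 (\<lambda>x. T x - pt p x) f = (\<Sum>x\<in>W. of_int (T x - pt p x) * f x)"
    by (rule cur0_eq_sum[OF W(1)]) (auto simp: W_def pt_def)
  also have "\<dots> = (\<Sum>x\<in>W. of_int (T x) * f x) - (\<Sum>x\<in>W. if x = p then f x else 0)"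
    by (simp add: sum_subtractf[symmetric] left_diff_distrib pt_def if_distrib[of real_of_int] cong: if_cong)
      (rule sum.cong; simp)
  also have "(\<Sum>x\<in>W. of_int (T x) * f x) = cur0 T f"
    by (rule cur0_eq_sum[OF W(1), symmetric]) (auto simp: W_def)
  also have "(\<Sum>x\<in>W. if x = p then f x else 0) = f p"
    using W by simp
  finally show ?thesis .
qed

lemma flat_neg_pt_le_1: "flat 1 (cur0 (\<lambda>x. 0 - pt p x)) \<le> 1"
proof -
  let ?S0 = "\<lambda>w::'a::euclidean_space \<Rightarrow> 'a. 0::real"
  have "cur0 (\<lambda>x. 0 - pt p x) f = - f p" for f :: "'a \<Rightarrow> real"
    using cur0_diff_pt[of "\<lambda>x. 0" p f] by (simp add: integral0_def cur0_def)
  then have mass0_le: "mass0 (\<lambda>f. cur0 (\<lambda>x. 0 - pt p x) f - bdry ?S0 f) \<le> 1"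
    unfolding mass0_def by (intro SUP_least) (auto simp: bdry_def abs_le_iff)
  have mass1_le: "mass1 ?S0 \<le> 0"
    unfolding mass1_def by (rule SUP_least) simp
  have "flat 1 (cur0 (\<lambda>x. 0 - pt p x)) \<le> mass0 (\<lambda>f. cur0 (\<lambda>x. 0 - pt p x) f - bdry ?S0 f) + ereal 1 * mass1 ?S0"
    unfolding flat_def by (rule INF_lower) (simp add: current1_def)
  also have "\<dots> \<le> 1 + 0"
    using mass0_le mass1_le by (intro add_mono) auto
  finally show ?thesis by simp
qed

lemma median_obj_three:
  "median_obj 1 [pt p1, pt p2, pt p3] T =
    flat 1 (cur0 (\<lambda>x. T x - pt p1 x)) + flat 1 (cur0 (\<lambda>x. T x - pt p2 x)) + flat 1 (cur0 (\<lambda>x. T x - pt p3 x))"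
  by (simp add: median_obj_def add.assoc)

lemma median_obj_at_0_le_3: "median_obj 1 [pt p1, pt p2, pt p3] (\<lambda>x. 0) \<le> 3"
proof -
  have "median_obj 1 [pt p1, pt p2, pt p3] (\<lambda>x. 0) \<le> 1 + 1 + 1"
    unfolding median_obj_three by (intro add_mono flat_neg_pt_le_1)
  then show ?thesis by simp
qed

section \<open>Test functions\<close>

definition bump :: "'a::euclidean_space \<Rightarrow> real \<Rightarrow> 'a \<Rightarrow> real" where
  "bump x0 r x = psi (r\<^sup>2 - (x - x0) \<bullet> (x - x0))"

definition bump_grad :: "'a::euclidean_space \<Rightarrow> real \<Rightarrow> 'a \<Rightarrow> 'a" where
  "bump_grad x0 r x = (- 2 * psi' (r\<^sup>2 - (x - x0) \<bullet> (x - x0))) *\<^sub>R (x - x0)"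

lemma smooth_fun_bump: "smooth_fun (bump x0 r)"
  using smooth_fun_compose[OF smooth_fun_sqdist smooth_fun_compose_affine[OF smooth_fun_psi, of "-1" "r\<^sup>2"]]
  by (simp add: bump_def[abs_def])

lemma has_gradient_bump: "has_gradient (bump x0 r) (bump_grad x0 r)"
proof -
  have "((\<lambda>s. psi (r\<^sup>2 - s)) has_real_derivative psi' (r\<^sup>2 - s) * (-1)) (at s)" for s
    by (rule DERIV_chain2[OF has_real_derivative_psi]) (auto intro!: derivative_eq_intros)
  from has_gradient_compose_sqdist[OF this, of x0] show ?thesis
    by (simp add: bump_def[abs_def] bump_grad_def[abs_def])
qed

lemma bump_vanishes: "0 \<le> r \<Longrightarrow> r \<le> dist x x0 \<Longrightarrow> bump x0 r x = 0 \<and> bump_grad x0 r x = 0"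
  using power_mono[of r "dist x x0" 2]
  by (simp add: bump_def bump_grad_def psi_eq psi'_eq dist_norm power2_norm_eq_inner)

lemma bump_bounds: "0 \<le> bump x0 r x \<and> bump x0 r x \<le> 1"
  by (simp add: bump_def psi_nonneg psi_le_1)

lemma bump_center_pos: "0 < r \<Longrightarrow> 0 < bump x0 r x0"
  by (simp add: bump_def psi_eq)

lemma norm_bump_grad_le: "0 \<le> r \<Longrightarrow> norm (bump_grad x0 r x) \<le> 8 * r"
proof (cases "r \<le> dist x x0")
  case True
  assume "0 \<le> r"
  then show ?thesis using bump_vanishes[OF _ True] by simp
next
  case False
  have "norm (bump_grad x0 r x) = 2 * \<bar>psi' (r\<^sup>2 - (x - x0) \<bullet> (x - x0))\<bar> * dist x x0"
    by (simp add: bump_grad_def dist_norm abs_mult)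
  also have "\<dots> \<le> 2 * 4 * r"
    using psi'_bounds[of "r\<^sup>2 - (x - x0) \<bullet> (x - x0)"] False
    by (intro mult_mono) auto
  finally show ?thesis by simp
qed

lemma bounded_if_vanishes_outside_ball: "(\<And>x. r \<le> dist x c \<Longrightarrow> f x = 0) \<Longrightarrow> bounded {x. f x \<noteq> 0}"
  by (rule bounded_subset[OF bounded_ball[of c r]]) (force simp: dist_commute)

lemma far_from_one_of: "2 * c \<le> dist q q' \<Longrightarrow> c \<le> dist x q \<or> c \<le> dist x q'"
  using dist_triangle[of q q' x] by (auto simp: dist_commute)

lemma exists_isolating_radius:
  fixes x :: "'a::metric_space"
  assumes "finite S" "0 < c"
  obtains r where "0 < r" "r \<le> c" "\<And>y. y \<in> S \<Longrightarrow> y \<noteq> x \<Longrightarrow> r \<le> dist y x"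
proof -
  define R where "R = insert c ((\<lambda>y. dist y x) ` (S - {x}))"
  have R: "finite R" "R \<noteq> {}" using assms by (simp_all add: R_def)
  have "0 < Min R" using R assms by (auto simp: R_def)
  moreover have "Min R \<le> c" "Min R \<le> dist y x" if "y \<in> S" "y \<noteq> x" for y
    using R that by (auto simp: R_def)
  moreover have "Min R \<le> c" using R by (simp add: R_def)
  ultimately show ?thesis using that by blast
qed

lemma cur0_eq_single_point:
  assumes "integral0 T" "\<And>y. T y \<noteq> 0 \<Longrightarrow> y \<noteq> x0 \<Longrightarrow> f y = 0"
  shows "cur0 T f = of_int (T x0) * f x0"
proof -
  have "cur0 T f = (\<Sum>y\<in>insert x0 {y. T y \<noteq> 0}. of_int (T y) * f y)"
    using assms(1) by (intro cur0_eq_sum) (auto simp: integral0_def)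
  also have "\<dots> = of_int (T x0) * f x0"
    using assms by (subst sum.insert_remove) (auto simp: integral0_def intro!: sum.neutral)
  finally show ?thesis .
qed

context radial_profile
begin

definition cutoff :: "'a::euclidean_space \<Rightarrow> 'a \<Rightarrow> real" where
  "cutoff p x = G ((x - p) \<bullet> (x - p))"

definition cutoff_grad :: "'a::euclidean_space \<Rightarrow> 'a \<Rightarrow> 'a" where
  "cutoff_grad p x = (2 * g ((x - p) \<bullet> (x - p))) *\<^sub>R (x - p)"

lemma smooth_fun_cutoff: "smooth_fun (cutoff p)"
  unfolding cutoff_def[abs_def] by (rule smooth_fun_compose[OF smooth_fun_sqdist smooth_fun_G])

lemma has_gradient_cutoff: "has_gradient (cutoff p) (cutoff_grad p)"
  unfolding cutoff_def[abs_def] cutoff_grad_def[abs_def]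
  by (rule has_gradient_compose_sqdist[OF has_real_derivative_G])

lemma cutoff_vanishes: "b \<le> dist x p \<Longrightarrow> cutoff p x = 0 \<and> cutoff_grad p x = 0"
  using power_mono[of b "dist x p" 2] b_pos G_vanishes
  by (simp add: cutoff_def cutoff_grad_def dist_norm power2_norm_eq_inner)

lemma cutoff_bounds: "0 \<le> cutoff p x \<and> cutoff p x \<le> 1"
  by (simp add: cutoff_def G_bounds)

lemma cutoff_center: "cutoff p p = 1"
  by (simp add: cutoff_def G_0)

lemma cutoff_le: "b / 2 \<le> dist x p \<Longrightarrow> cutoff p x \<le> 1 - \<kappa>"
  using power_mono[of "b / 2" "dist x p" 2] b_pos G_le
  by (simp add: cutoff_def dist_norm power2_norm_eq_inner power_divide)

lemma norm_cutoff_grad_le: "norm (cutoff_grad p x) \<le> \<theta>"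
  using slope_le[of "(x - p) \<bullet> (x - p)"]
  by (simp add: cutoff_grad_def norm_eq_sqrt_inner[of "x - p"] abs_mult mult_ac)

lemma \<theta>_nonneg: "0 \<le> \<theta>"
  using norm_cutoff_grad_le[of 0 0] norm_ge_zero order_trans by blast

definition far_triple :: "'a::euclidean_space \<Rightarrow> 'a \<Rightarrow> 'a \<Rightarrow> bool" where
  "far_triple q1 q2 q3 \<longleftrightarrow> 2 * b \<le> dist q1 q2 \<and> 2 * b \<le> dist q1 q3 \<and> 2 * b \<le> dist q2 q3"

lemma far_triple_permute: "far_triple q1 q2 q3 \<Longrightarrow> far_triple q2 q1 q3 \<and> far_triple q3 q1 q2"
  by (auto simp: far_triple_def dist_commute)

lemma far_triple_near_at_most_one:
  assumes "far_triple q1 q2 q3"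
  shows "(b \<le> dist x q2 \<and> b \<le> dist x q3) \<or> (b \<le> dist x q1 \<and> b \<le> dist x q3) \<or> (b \<le> dist x q1 \<and> b \<le> dist x q2)"
  using assms far_from_one_of[of b q1 q2 x] far_from_one_of[of b q1 q3 x] far_from_one_of[of b q2 q3 x]
  unfolding far_triple_def by blast

text \<open>The weight \<open>e\<close> of the bump in the test function centred at \<open>q\<close> is admissible when it keeps
  the gradient of norm at most \<open>1\<close> and, near \<open>q\<close>, the values above \<open>-1\<close>.\<close>
definition admissible :: "'a::euclidean_space \<Rightarrow> 'a \<Rightarrow> real \<Rightarrow> real \<Rightarrow> bool" where
  "admissible q x0 r e \<longleftrightarrow> \<bar>e\<bar> * (8 * r) + \<theta> \<le> 1 \<and> (e = 0 \<or> (b \<le> dist x0 q \<and> \<bar>e\<bar> \<le> \<kappa> \<and> \<bar>e\<bar> \<le> 1 / 2))"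

definition dual_test :: "'a::euclidean_space \<Rightarrow> 'a \<Rightarrow> 'a \<Rightarrow> real \<Rightarrow> 'a \<Rightarrow> real \<Rightarrow> 'a \<Rightarrow> real" where
  "dual_test q1 q2 q3 e x0 r x =
    (-1) * cutoff q1 x + (1/2) * cutoff q2 x + (1/2) * cutoff q3 x + e * bump x0 r x"

definition dual_test_grad :: "'a::euclidean_space \<Rightarrow> 'a \<Rightarrow> 'a \<Rightarrow> real \<Rightarrow> 'a \<Rightarrow> real \<Rightarrow> 'a \<Rightarrow> 'a" where
  "dual_test_grad q1 q2 q3 e x0 r x =
    (-1) *\<^sub>R cutoff_grad q1 x + (1/2) *\<^sub>R cutoff_grad q2 x + (1/2) *\<^sub>R cutoff_grad q3 x
      + e *\<^sub>R bump_grad x0 r x"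

lemma smooth_fun_dual_test: "smooth_fun (dual_test q1 q2 q3 e x0 r)"
  unfolding dual_test_def[abs_def]
  by (intro smooth_fun_add smooth_fun_cmult smooth_fun_cutoff smooth_fun_bump)

lemma has_gradient_dual_test: "has_gradient (dual_test q1 q2 q3 e x0 r) (dual_test_grad q1 q2 q3 e x0 r)"
  unfolding dual_test_def[abs_def] dual_test_grad_def[abs_def]
  by (intro has_gradient_add has_gradient_cmult has_gradient_cutoff has_gradient_bump)

lemma norm_cutoff_grads_le:
  assumes "far_triple q1 q2 q3"
  shows "norm (cutoff_grad q1 x) + (1/2) * norm (cutoff_grad q2 x) + (1/2) * norm (cutoff_grad q3 x) \<le> \<theta>"
  using far_triple_near_at_most_one[OF assms, of x] cutoff_vanishes[of x] \<theta>_nonneg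
    norm_cutoff_grad_le[of q1 x] norm_cutoff_grad_le[of q2 x] norm_cutoff_grad_le[of q3 x]
  by auto

lemma abs_dual_test_le:
  assumes far: "far_triple q1 q2 q3" and e: "admissible q1 x0 r e" and r: "0 < r" "r \<le> b / 2"
  shows "\<bar>dual_test q1 q2 q3 e x0 r x\<bar> \<le> 1"
proof -
  have small: "\<bar>e * bump x0 r x\<bar> \<le> 1/2 \<and>
      (e * bump x0 r x \<noteq> 0 \<longrightarrow> cutoff q1 x \<le> 1 - \<kappa> \<and> \<bar>e * bump x0 r x\<bar> \<le> \<kappa>)"
  proof (cases "e * bump x0 r x = 0")
    case False
    then have "dist x x0 < r" using bump_vanishes[of r x x0] r by force
    moreover have e_bounds: "b \<le> dist x0 q1" "\<bar>e\<bar> \<le> \<kappa>" "\<bar>e\<bar> \<le> 1/2"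
      using False e by (auto simp: admissible_def)
    ultimately have "b / 2 \<le> dist x q1"
      using r dist_triangle[of x0 q1 x] by (simp add: dist_commute)
    moreover have "\<bar>e * bump x0 r x\<bar> \<le> \<bar>e\<bar>"
      using bump_bounds[of x0 r x] by (simp add: abs_mult mult_left_le)
    ultimately show ?thesis using e_bounds cutoff_le by auto
  qed auto
  show ?thesis
    using far_triple_near_at_most_one[OF far, of x] cutoff_vanishes[of x] small
      cutoff_bounds[of q1 x] cutoff_bounds[of q2 x] cutoff_bounds[of q3 x]
    unfolding dual_test_def by (auto simp: abs_le_iff)
qed

lemma norm_dual_test_grad_le:
  assumes far: "far_triple q1 q2 q3" and e: "admissible q1 x0 r e" and r: "0 < r"
  shows "norm (dual_test_grad q1 q2 q3 e x0 r x) \<le> 1"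
proof -
  let ?a = "(-1) *\<^sub>R cutoff_grad q1 x" and ?b = "(1/2) *\<^sub>R cutoff_grad q2 x"
    and ?c = "(1/2) *\<^sub>R cutoff_grad q3 x" and ?d = "e *\<^sub>R bump_grad x0 r x"
  have "norm (dual_test_grad q1 q2 q3 e x0 r x) \<le> norm ?a + norm ?b + norm ?c + norm ?d"
    using norm_triangle_ineq[of "?a + ?b + ?c" ?d] norm_triangle_ineq[of "?a + ?b" ?c]
      norm_triangle_ineq[of ?a ?b] unfolding dual_test_grad_def by linarith
  also have "\<dots> = norm (cutoff_grad q1 x) + (1/2) * norm (cutoff_grad q2 x)
      + (1/2) * norm (cutoff_grad q3 x) + \<bar>e\<bar> * norm (bump_grad x0 r x)"
    by simp
  also have "\<dots> \<le> \<theta> + \<bar>e\<bar> * (8 * r)"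
    using r by (intro add_mono norm_cutoff_grads_le[OF far] mult_left_mono norm_bump_grad_le) auto
  also have "\<dots> \<le> 1"
    using e by (simp add: admissible_def)
  finally show ?thesis .
qed

lemma dual_test_le_flat:
  assumes far: "far_triple q1 q2 q3" and e: "admissible q1 x0 r e" and r: "0 < r" "r \<le> b / 2"
  shows "ereal (H (dual_test q1 q2 q3 e x0 r)) \<le> flat 1 H"
proof (rule pairing_le_flat[OF smooth_fun_dual_test _ _ has_gradient_dual_test])
  have bounded_parts: "bounded {x. cutoff q x \<noteq> 0}" "bounded {x. cutoff_grad q x \<noteq> 0}"
    "bounded {x. bump x0 r x \<noteq> 0}" "bounded {x. bump_grad x0 r x \<noteq> 0}" for q
    using cutoff_vanishes bump_vanishes[of r] r
    by (auto intro!: bounded_if_vanishes_outside_ball[of b q] bounded_if_vanishes_outside_ball[of r x0])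
  show "bounded {x. dual_test q1 q2 q3 e x0 r x \<noteq> 0}"
    by (rule bounded_subset[where T="{x. cutoff q1 x \<noteq> 0} \<union> {x. cutoff q2 x \<noteq> 0} \<union>
        {x. cutoff q3 x \<noteq> 0} \<union> {x. bump x0 r x \<noteq> 0}"]) (auto simp: bounded_parts dual_test_def)
  show "bounded {x. dual_test_grad q1 q2 q3 e x0 r x \<noteq> 0}"
    by (rule bounded_subset[where T="{x. cutoff_grad q1 x \<noteq> 0} \<union> {x. cutoff_grad q2 x \<noteq> 0} \<union>
        {x. cutoff_grad q3 x \<noteq> 0} \<union> {x. bump_grad x0 r x \<noteq> 0}"])
      (auto simp: bounded_parts dual_test_grad_def)
  show "\<forall>x. \<bar>dual_test q1 q2 q3 e x0 r x\<bar> \<le> 1"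
    using abs_dual_test_le[OF far e r] by blast
  show "\<forall>x. norm (dual_test_grad q1 q2 q3 e x0 r x) \<le> 1"
    using norm_dual_test_grad_le[OF far e r(1)] by blast
qed

lemma dual_test_at_center:
  assumes far: "far_triple q1 q2 q3" and e: "admissible q1 x0 r e" and r: "0 < r" "r \<le> b / 2"
  shows "dual_test q1 q2 q3 e x0 r q1 = -1"
proof -
  have "cutoff q2 q1 = 0" "cutoff q3 q1 = 0"
    using far cutoff_vanishes[of q1 q2] cutoff_vanishes[of q1 q3] b_pos unfolding far_triple_def by auto
  moreover have "e * bump x0 r q1 = 0"
  proof (cases "e = 0")
    case False
    then have "r \<le> dist q1 x0" using e r b_pos by (auto simp: admissible_def dist_commute)
    then show ?thesis using bump_vanishes[of r q1 x0] r by simp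
  qed simp
  ultimately show ?thesis by (simp add: dual_test_def cutoff_center)
qed

lemma median_obj_ge_dual:
  assumes far: "far_triple p1 p2 p3" and T: "integral0 T" and r: "0 < r" "r \<le> b / 2"
    and u: "admissible p1 x0 r u1" "admissible p2 x0 r u2" "admissible p3 x0 r u3"
  shows "ereal (3 + (u1 + u2 + u3) * cur0 T (bump x0 r)) \<le> median_obj 1 [pt p1, pt p2, pt p3] T"
proof -
  define f1 where "f1 = dual_test p1 p2 p3 u1 x0 r"
  define f2 where "f2 = dual_test p2 p1 p3 u2 x0 r"
  define f3 where "f3 = dual_test p3 p1 p2 u3 x0 r"
  have far': "far_triple p2 p1 p3" "far_triple p3 p1 p2"
    using far_triple_permute[OF far] by auto
  have centers: "f1 p1 = -1" "f2 p2 = -1" "f3 p3 = -1"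
    unfolding f1_def f2_def f3_def using far far' u r by (auto intro: dual_test_at_center)
  text \<open>In the sum of the three test functions the cut-offs cancel, leaving only the bump at \<open>x0\<close>.\<close>
  have "cur0 T f1 + cur0 T f2 + cur0 T f3 = cur0 T (\<lambda>x. f1 x + f2 x + f3 x)"
    by (simp add: cur0_add)
  also have "(\<lambda>x. f1 x + f2 x + f3 x) = (\<lambda>x. (u1 + u2 + u3) * bump x0 r x)"
    by (simp add: f1_def f2_def f3_def dual_test_def algebra_simps)
  also have "cur0 T \<dots> = (u1 + u2 + u3) * cur0 T (bump x0 r)"
    by (rule cur0_cmult)
  finally have "3 + (u1 + u2 + u3) * cur0 T (bump x0 r) =
      cur0 (\<lambda>x. T x - pt p1 x) f1 + cur0 (\<lambda>x. T x - pt p2 x) f2 + cur0 (\<lambda>x. T x - pt p3 x) f3"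
    using centers by (simp add: cur0_diff_pt[OF T])
  then have "ereal (3 + (u1 + u2 + u3) * cur0 T (bump x0 r)) =
      ereal (cur0 (\<lambda>x. T x - pt p1 x) f1) + ereal (cur0 (\<lambda>x. T x - pt p2 x) f2)
      + ereal (cur0 (\<lambda>x. T x - pt p3 x) f3)"
    by simp
  also have "\<dots> \<le> median_obj 1 [pt p1, pt p2, pt p3] T"
    unfolding median_obj_three f1_def f2_def f3_def
    using far far' u r by (intro add_mono dual_test_le_flat)
  finally show ?thesis .
qed

lemma median_obj_ge_3:
  assumes "far_triple p1 p2 p3" "integral0 T"
  shows "3 \<le> median_obj 1 [pt p1, pt p2, pt p3] T"
  using median_obj_ge_dual[OF assms, of "b / 2" p1 0 0 0] b_pos \<theta>_less_1
  by (simp add: admissible_def)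

lemma exists_admissible_coeffs:
  assumes far: "far_triple p1 p2 p3" and r: "0 < r" and s: "s \<noteq> 0"
  obtains u1 u2 u3 where "admissible p1 x r u1" "admissible p2 x r u2" "admissible p3 x r u3"
    "0 < s * (u1 + u2 + u3)"
proof -
  define e where "e = min (min \<kappa> (1/2)) ((1 - \<theta>) / (8 * r))"
  have "e * (8 * r) \<le> (1 - \<theta>) / (8 * r) * (8 * r)"
    using r by (intro mult_right_mono) (auto simp: e_def)
  then have e: "0 < e" "e \<le> \<kappa>" "e \<le> 1/2" "e * (8 * r) + \<theta> \<le> 1"
    using \<kappa>_pos \<theta>_less_1 r by (auto simp: e_def)
  text \<open>Put weight \<open>e\<close>, with the sign of \<open>s\<close>, on each point at distance at least \<open>b\<close> from \<open>x\<close>;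
    at least two of the three points are that far.\<close>
  define u where "u q = (if b \<le> dist x q then sgn s * e else 0)" for q
  have admissible: "admissible q x r (u q)" for q
    using e \<theta>_less_1 by (auto simp: admissible_def u_def abs_mult abs_sgn_eq s)
  have su: "s * u q = (if b \<le> dist x q then \<bar>s\<bar> * e else 0)" for q
    by (simp add: u_def sgn_if)
  have "b \<le> dist x p1 \<or> b \<le> dist x p2"
    using far far_from_one_of[of b p1 p2 x] by (simp add: far_triple_def)
  then have "0 < s * u p1 \<or> 0 < s * u p2"
    using e s by (auto simp: su)
  moreover have "0 \<le> s * u q" for q
    using e by (simp add: su)
  ultimately have "0 < s * (u p1 + u p2 + u p3)"
    unfolding distrib_left by (smt (verit))
  then show ?thesis using admissible that by blast
qed

lemma median_obj_gt_3:
  assumes far: "far_triple p1 p2 p3" and T: "integral0 T" "T \<noteq> (\<lambda>x. 0)"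
  shows "3 < median_obj 1 [pt p1, pt p2, pt p3] T"
proof -
  obtain x0 where x0: "T x0 \<noteq> 0" using T(2) by auto
  obtain r where r: "0 < r" "r \<le> b / 2" and isolated: "\<And>y. T y \<noteq> 0 \<Longrightarrow> y \<noteq> x0 \<Longrightarrow> r \<le> dist y x0"
    using exists_isolating_radius[of "{y. T y \<noteq> 0}" "b / 2" x0] T(1) b_pos by (auto simp: integral0_def)
  have cur: "cur0 T (bump x0 r) = of_int (T x0) * bump x0 r x0"
  proof (rule cur0_eq_single_point[OF T(1)])
    fix y
    assume "T y \<noteq> 0" "y \<noteq> x0"
    then show "bump x0 r y = 0" using bump_vanishes[of r y x0] isolated r by simp
  qed
  obtain u1 u2 u3 where u: "admissible p1 x0 r u1" "admissible p2 x0 r u2" "admissible p3 x0 r u3"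
    and pos: "0 < of_int (T x0) * (u1 + u2 + u3)"
    by (rule exists_admissible_coeffs[OF far r(1), where s="of_int (T x0)" and x=x0]) (use x0 in simp)
  have "(u1 + u2 + u3) * cur0 T (bump x0 r) = (of_int (T x0) * (u1 + u2 + u3)) * bump x0 r x0"
    by (simp add: cur mult_ac)
  also have "\<dots> > 0"
    using pos bump_center_pos[OF r(1), of x0] by (rule mult_pos_pos)
  finally have "0 < (u1 + u2 + u3) * cur0 T (bump x0 r)" .
  then have "ereal 3 < ereal (3 + (u1 + u2 + u3) * cur0 T (bump x0 r))" by simp
  also have "\<dots> \<le> median_obj 1 [pt p1, pt p2, pt p3] T"
    by (rule median_obj_ge_dual[OF far T(1) r u])
  finally show ?thesis by simp
qed

end

theorem mainTheorem2:
  fixes p1 p2 p3 :: "'a::euclidean_space"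
  assumes "dist p1 p2 > 4" and "dist p1 p3 > 4" and "dist p2 p3 > 4"
  shows "integral0 (\<lambda>x::'a. 0::int) \<and>
    (\<forall>T. integral0 T \<longrightarrow>
       median_obj 1 [pt p1, pt p2, pt p3] (\<lambda>x. 0) \<le> median_obj 1 [pt p1, pt p2, pt p3] T) \<and>
    (\<forall>T. integral0 T \<and>
       median_obj 1 [pt p1, pt p2, pt p3] T = median_obj 1 [pt p1, pt p2, pt p3] (\<lambda>x. 0)
       \<longrightarrow> T = (\<lambda>x. 0))"
proof -
  define b where "b = 1 + min (dist p1 p2) (min (dist p1 p3) (dist p2 p3)) / 4"
  have "b > 2" using assms by (simp add: b_def)
  then obtain G g \<theta> \<kappa> where "radial_profile G g \<theta> \<kappa> b"
    using radial_profile_exists by blast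
  then interpret radial_profile G g \<theta> \<kappa> b .
  have far: "far_triple p1 p2 p3"
    unfolding far_triple_def using assms by (auto simp: b_def min_def)
  note at_0 = median_obj_at_0_le_3[of p1 p2 p3]
  show ?thesis
  proof (intro conjI allI impI)
    show "integral0 (\<lambda>x::'a. 0::int)" by (simp add: integral0_def)
  next
    fix T :: "'a \<Rightarrow> int"
    assume "integral0 T"
    then show "median_obj 1 [pt p1, pt p2, pt p3] (\<lambda>x. 0) \<le> median_obj 1 [pt p1, pt p2, pt p3] T"
      using at_0 median_obj_ge_3[OF far] order_trans by blast
  next
    fix T :: "'a \<Rightarrow> int"
    assume T: "integral0 T \<and>
      median_obj 1 [pt p1, pt p2, pt p3] T = median_obj 1 [pt p1, pt p2, pt p3] (\<lambda>x. 0)"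
    show "T = (\<lambda>x. 0)"
      using T at_0 median_obj_gt_3[OF far, of T] by (metis not_less)
  qed
qed

end
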